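(* For positive integers $a_1,a_2$ define \[ C_1(a_1,a_2) := \frac{a_1a_2}{3}\sum_{d_1,d_2\geq 1}\frac{\mu(d_1)\mu(d_2)}{d_1 d_2\,\big[d_1/(a_1,d_1),\, d_2/(a_2,d_2)\big]} . \] Then this double series is absolutely convergent, and there is an absolute constant $C>0$ such that for all positive integers $a_1,a_2$ and every real $x\geq 2$, \[ \left|\sum_{n\leq x}\varphi(a_1 n)\varphi(a_2 n) - C_1(a_1,a_2)\,x^3\right| \leq C\,\sigma(a_1a_2)\,x^2(\log x)^2 . \]
   Context: $\varphi$ is Euler's totient function, $\mu$ the Möbius function, $\sigma$ the sum-of-divisors function; $(a,b)$ and $[a,b]$ denote the gcd and lcm of integers $a,b$. The sum over $n\leq x$ is over positive integers $n$. *)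

theory Defs
  imports "HOL-Analysis.Analysis" "HOL-Number_Theory.Number_Theory"
    "HOL-Computational_Algebra.Squarefree"
begin

text \<open>Moebius function: mu(n) = (-1)^k if n is squarefree with k prime factors, 0 otherwise
  (and mu(0) = 0 by convention; only positive arguments are used).\<close>
definition mobius :: "nat \<Rightarrow> int" where
  "mobius n = (if n = 0 \<or> \<not> squarefree n then 0 else (-1) ^ card (prime_factors n))"

definition divisor_sigma :: "nat \<Rightarrow> nat" where
  "divisor_sigma n = (\<Sum>d | d dvd n. d)"

definition C1_term :: "nat \<Rightarrow> nat \<Rightarrow> nat \<times> nat \<Rightarrow> real" where
  "C1_term a1 a2 = (\<lambda>(d1, d2). real_of_int (mobius d1 * mobius d2) /
      (real d1 * real d2 * real (lcm (d1 div gcd a1 d1) (d2 div gcd a2 d2))))"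

definition C1 :: "nat \<Rightarrow> nat \<Rightarrow> real" where
  "C1 a1 a2 = real (a1 * a2) / 3 * infsum (C1_term a1 a2) ({1..} \<times> {1..})"

end

theory Submission
  imports Defs "HOL-Analysis.Harmonic_Numbers"
begin

(* Since phi(a n) / (a n) = prod_{p | a n} (1 - 1/p), one has
   phi(a n) = phi(a) n sum_{f | n, (f, a) = 1} mu(f) / f, so the sum over n <= x equals
   phi(a1) phi(a2) sum_{f1, f2 <= x, (f_i, a_i) = 1} mu(f1) mu(f2) / (f1 f2) sum_{n <= x, [f1, f2] | n} n^2,
   and the inner sum is x^3 / (3 [f1, f2]) + O(x^2). On the other hand, writing each squarefree d_i
   uniquely as e_i f_i with e_i | a_i and (f_i, a_i) = 1 turns the series defining C_1 into
   phi(a1) phi(a2) / 3 times the series of mu(f1) mu(f2) / (f1 f2 [f1, f2]) over such f_i. As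
   1 / (f1 f2 [f1, f2]) <= 1 / (f1 f2 max(f1, f2)), the tail of this series outside [1, x]^2 is
   O(log x / x). Altogether the error is O(phi(a1) phi(a2) x^2 log^2 x), and
   phi(a1) phi(a2) <= a1 a2 <= sigma(a1 a2). *)

section \<open>Moebius sums over divisors\<close>

lemma mobius_mult_coprime:
  assumes "coprime a b"
  shows "mobius (a * b) = mobius a * mobius b"
proof (cases "a = 0 \<or> b = 0")
  case True
  then show ?thesis by (auto simp: mobius_def)
next
  case False
  have "squarefree (a * b) \<longleftrightarrow> squarefree a \<and> squarefree b"
    using assms squarefree_mult_coprime squarefree_multD by blast
  moreover have "prime_factors (a * b) = prime_factors a \<union> prime_factors b"
    using False by (intro prime_factors_product) auto
  moreover have "prime_factors a \<inter> prime_factors b = {}"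
    using assms by (auto simp: prime_factors_dvd dest: coprime_common_divisor not_prime_unit)
  ultimately show ?thesis
    using False by (auto simp: mobius_def power_add card_Un_disjoint)
qed

lemma abs_mobius_le_one: "\<bar>mobius n\<bar> \<le> 1"
  by (simp add: mobius_def)

lemma prime_factors_prod_primes:
  fixes X :: "nat set"
  assumes "finite X" "\<And>p. p \<in> X \<Longrightarrow> prime p"
  shows "prime_factors (\<Prod>X) = X"
proof -
  have "prime_factorization (\<Prod>X) = (\<Sum>p\<in>X. prime_factorization p)"
    using assms by (intro prime_factorization_prod) (auto dest: prime_gt_0_nat)
  also have "\<dots> = (\<Sum>p\<in>X. {#p#})"
    using assms by (intro sum.cong refl) (simp add: prime_factorization_prime)
  also have "\<dots> = mset_set X" using assms(1) by (induction rule: finite_induct) auto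
  finally show ?thesis using assms(1) by simp
qed

lemma squarefree_prod_primes:
  fixes X :: "nat set"
  assumes "finite X" "\<And>p. p \<in> X \<Longrightarrow> prime p"
  shows "squarefree (\<Prod>X)"
  using assms by (intro squarefree_prod_coprime) (auto intro: squarefree_prime primes_coprime)

lemma prod_prime_factors_squarefree:
  fixes n :: nat
  assumes "squarefree n"
  shows "\<Prod>(prime_factors n) = n"
proof -
  have n: "n > 0" using assms by (auto intro: Nat.gr0I)
  have "n = (\<Prod>p \<in> prime_factors n. p ^ multiplicity p n)"
    using n by (rule prime_factorization_nat)
  also have "\<dots> = \<Prod>(prime_factors n)"
    using assms n by (intro prod.cong refl) (simp add: squarefree_factorial_semiring')
  finally show ?thesis by simp
qed

lemma mobius_prod_primes:
  fixes X :: "nat set"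
  assumes "finite X" "\<And>p. p \<in> X \<Longrightarrow> prime p"
  shows "mobius (\<Prod>X) = (-1) ^ card X"
  using assms squarefree_prod_primes[OF assms] prime_factors_prod_primes[OF assms]
  by (auto simp: mobius_def dest: prime_gt_0_nat)

lemma prod_primes_dvd:
  fixes X :: "nat set"
  assumes "finite X" "\<And>p. p \<in> X \<Longrightarrow> prime p \<and> p dvd n"
  shows "\<Prod>X dvd n"
  using assms
proof (induction X rule: finite_induct)
  case (insert p X)
  have "coprime p (\<Prod>X)"
    using insert by (intro prod_coprime_right) (auto intro: primes_coprime)
  with insert show ?case by (auto intro: divides_mult)
qed simp

lemma squarefree_coprime_divisors_eq:
  fixes n a :: nat
  assumes "n > 0"
  shows "{f. squarefree f \<and> f dvd n \<and> coprime f a}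
           = Prod ` Pow {p \<in> prime_factors n. \<not> p dvd a}"
    (is "?S = Prod ` Pow ?Q")
proof
  show "?S \<subseteq> Prod ` Pow ?Q"
  proof
    fix f assume f: "f \<in> ?S"
    have "prime_factors f \<subseteq> ?Q"
      using f assms dvd_prime_factors[of n f]
      by (auto simp: prime_factors_dvd dest: coprime_common_divisor not_prime_unit)
    thus "f \<in> Prod ` Pow ?Q"
      using f prod_prime_factors_squarefree[of f] by (metis (mono_tags) PowI image_eqI mem_Collect_eq)
  qed
next
  show "Prod ` Pow ?Q \<subseteq> ?S"
  proof
    fix f assume "f \<in> Prod ` Pow ?Q"
    then obtain X where X: "X \<subseteq> ?Q" "f = \<Prod>X" by auto
    have fin: "finite X" and primes: "\<And>p. p \<in> X \<Longrightarrow> prime p"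
      using X(1) finite_subset[OF X(1)] by (auto simp: prime_factors_dvd)
    have "coprime f a"
      using X by (auto intro!: prod_coprime_left prime_imp_coprime simp: prime_factors_dvd)
    moreover have "f dvd n"
      using X fin by (auto intro!: prod_primes_dvd simp: prime_factors_dvd)
    ultimately show "f \<in> ?S"
      using X(2) squarefree_prod_primes[OF fin primes] by simp
  qed
qed

lemma sum_Pow_mobius_div_Prod:
  fixes Q :: "nat set"
  assumes "finite Q" "\<And>p. p \<in> Q \<Longrightarrow> prime p"
  shows "(\<Sum>X\<in>Pow Q. real_of_int (mobius (\<Prod>X)) / real (\<Prod>X)) = (\<Prod>p\<in>Q. 1 - 1 / real p)"
proof -
  have "(\<Prod>p\<in>Q. 1 - 1 / real p) = (\<Prod>p\<in>Q. - 1 / real p + 1)" by simp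
  also have "\<dots> = (\<Sum>X\<in>Pow Q. (\<Prod>p\<in>X. - 1 / real p) * (\<Prod>p\<in>Q - X. 1))"
    by (rule prod_add[OF assms(1)])
  also have "\<dots> = (\<Sum>X\<in>Pow Q. real_of_int (mobius (\<Prod>X)) / real (\<Prod>X))"
  proof (intro sum.cong refl)
    fix X assume "X \<in> Pow Q"
    hence "finite X" "\<And>p. p \<in> X \<Longrightarrow> prime p" using assms finite_subset by auto
    moreover have "(\<Prod>p\<in>X. - 1 / real p) = (\<Prod>p\<in>X. - 1) / (\<Prod>p\<in>X. real p)"
      by (rule prod_dividef)
    ultimately show "(\<Prod>p\<in>X. - 1 / real p) * (\<Prod>p\<in>Q - X. 1) = real_of_int (mobius (\<Prod>X)) / real (\<Prod>X)"
      by (simp add: mobius_prod_primes)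
  qed
  finally show ?thesis by simp
qed

lemma sum_mobius_div_coprime_divisors:
  fixes n a :: nat
  assumes "n > 0"
  shows "(\<Sum>f | f dvd n \<and> coprime f a. real_of_int (mobius f) / real f)
           = (\<Prod>p | p \<in> prime_factors n \<and> \<not> p dvd a. 1 - 1 / real p)"
proof -
  define Q where "Q = {p \<in> prime_factors n. \<not> p dvd a}"
  have Q: "finite Q" "\<And>p. p \<in> Q \<Longrightarrow> prime p" unfolding Q_def by (auto simp: prime_factors_dvd)
  have "(\<Sum>f | f dvd n \<and> coprime f a. real_of_int (mobius f) / real f)
      = (\<Sum>f | squarefree f \<and> f dvd n \<and> coprime f a. real_of_int (mobius f) / real f)"
    using assms by (intro sum.mono_neutral_right) (auto simp: mobius_def)
  also have "\<dots> = (\<Sum>f\<in>Prod ` Pow Q. real_of_int (mobius f) / real f)"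
    unfolding Q_def using squarefree_coprime_divisors_eq[OF assms] by simp
  also have "\<dots> = (\<Sum>X\<in>Pow Q. real_of_int (mobius (\<Prod>X)) / real (\<Prod>X))"
  proof (rule sum.reindex_cong)
    show "inj_on Prod (Pow Q)"
      using Q prime_factors_prod_primes by (intro inj_onI) (metis PowD finite_subset subsetD)
  qed simp_all
  also have "\<dots> = (\<Prod>p\<in>Q. 1 - 1 / real p)" using Q by (rule sum_Pow_mobius_div_Prod)
  finally show ?thesis unfolding Q_def by simp
qed

lemma sum_mobius_div_divisors:
  fixes a :: nat
  assumes "a > 0"
  shows "(\<Sum>e | e dvd a. real_of_int (mobius e) / real e) = real (totient a) / real a"
proof -
  have "{p. p \<in> prime_factors a \<and> \<not> p dvd 1} = prime_factors a"
    by (auto dest: in_prime_factors_imp_prime)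
  thus ?thesis
    using sum_mobius_div_coprime_divisors[OF assms, of 1] assms by (simp add: totient_formula2)
qed

lemma totient_mult_eq:
  fixes a n :: nat
  assumes "a > 0" "n > 0"
  shows "real (totient (a * n)) = real (totient a) * real n *
           (\<Sum>f | f dvd n \<and> coprime f a. real_of_int (mobius f) / real f)"
proof -
  define Q where "Q = {p \<in> prime_factors n. \<not> p dvd a}"
  have "prime_factors (a * n) = prime_factors a \<union> Q"
    using assms by (auto simp: Q_def prime_factors_product in_prime_factors_iff)
  moreover have "prime_factors a \<inter> Q = {}" "finite Q" unfolding Q_def by auto
  ultimately have "(\<Prod>p\<in>prime_factors (a * n). 1 - 1 / real p)
      = (\<Prod>p\<in>prime_factors a. 1 - 1 / real p) * (\<Prod>p\<in>Q. 1 - 1 / real p)"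
    by (simp add: prod.union_disjoint)
  thus ?thesis
    using sum_mobius_div_coprime_divisors[OF assms(2), of a]
    by (simp add: totient_formula2[of "a * n"] totient_formula2[of a] Q_def)
qed

section \<open>Harmonic sums and the majorant\<close>

lemma harm_le_one_plus_ln:
  assumes "n \<ge> 1"
  shows "harm n \<le> 1 + ln (real n)"
proof -
  obtain m where n: "n = Suc m" using assms by (cases n) auto
  have "harm (Suc m) - ln (real (Suc m)) \<le> harm (Suc 0) - ln (real (Suc 0))"
    using decseqD[OF decseq_harm_diff_ln, of 0 m] by simp
  thus ?thesis unfolding n by (simp add: harm_def)
qed

lemma sum_inverse_squares_tail_le:
  assumes "m \<ge> 1"
  shows "(\<Sum>k\<in>{m<..M}. 1 / (real k)^2) \<le> 1 / real m"
proof (cases "m \<le> M")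
  case True
  have "(\<Sum>k\<in>{m<..M}. 1 / (real k)^2) \<le> 1 / real m - 1 / real M"
    using True
  proof (induction M rule: dec_induct)
    case (step M)
    have M: "real M \<ge> 1" using step assms by simp
    have "1 / (real (Suc M))^2 \<le> 1 / (real M * real (Suc M))"
      using M by (intro divide_left_mono mult_pos_pos) (auto simp: power2_eq_square)
    also have "\<dots> = 1 / real M - 1 / real (Suc M)" using M by (simp add: field_simps)
    finally show ?case using step by (simp add: atLeastSucAtMost_greaterThanAtMost[symmetric])
  qed simp
  moreover have "0 \<le> 1 / real M" by simp
  ultimately show ?thesis by linarith
qed simp

lemma ln_over_square_le_telescoping:
  fixes x :: real
  assumes "x \<ge> 1"
  shows "(2 + ln (x + 1)) / (x + 1)^2 \<le> (4 + ln x) / x - (4 + ln (x + 1)) / (x + 1)"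
proof -
  define D where "D = ln (x + 1) - ln x"
  have "(x + 1) * D \<le> (x + 1) * (1 / x)"
    using ln_diff_le_inverse[OF assms] assms unfolding D_def by (intro mult_left_mono) auto
  also have "\<dots> \<le> 2" using assms by (simp add: field_simps)
  finally have xD: "(x + 1) * D \<le> 2" .
  have "(2 + ln (x + 1)) / (x + 1)^2 \<le> (2 + ln (x + 1)) / (x * (x + 1))"
    using assms by (intro divide_left_mono) (auto simp: power2_eq_square)
  also have "\<dots> \<le> (4 + ln (x + 1) - (x + 1) * D) / (x * (x + 1))"
    using assms xD by (intro divide_right_mono) auto
  also have "\<dots> = (4 + ln x) / x - (4 + ln (x + 1)) / (x + 1)"
    unfolding D_def using assms by (simp add: field_simps)
  finally show ?thesis .
qed

lemma sum_ln_over_squares_tail_le: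
  assumes "N \<ge> 1"
  shows "(\<Sum>j\<in>{N<..M}. (2 + ln (real j)) / (real j)^2) \<le> (4 + ln (real N)) / real N"
proof (cases "N \<le> M")
  case True
  have "(\<Sum>j\<in>{N<..M}. (2 + ln (real j)) / (real j)^2)
          \<le> (4 + ln (real N)) / real N - (4 + ln (real M)) / real M"
    using True
  proof (induction M rule: dec_induct)
    case (step M)
    have "real M \<ge> 1" using step assms by simp
    from ln_over_square_le_telescoping[OF this] step show ?case
      by (simp add: atLeastSucAtMost_greaterThanAtMost[symmetric] add.commute)
  qed simp
  moreover have "(4 + ln (real M)) / real M \<ge> 0" using True assms by simp
  ultimately show ?thesis by linarith
qed (use assms in simp)

definition max_majorant :: "nat \<times> nat \<Rightarrow> real" where
  "max_majorant = (\<lambda>(f1, f2). 1 / (real f1 * real f2 * real (max f1 f2)))"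

lemma max_majorant_nonneg: "max_majorant p \<ge> 0"
  by (simp add: max_majorant_def case_prod_beta)

lemma max_majorant_commute: "max_majorant (f1, f2) = max_majorant (f2, f1)"
  by (simp add: max_majorant_def max.commute mult.commute)

lemma sum_max_majorant_row_le:
  assumes "f1 \<ge> 1"
  shows "(\<Sum>f2\<in>{1..M}. max_majorant (f1, f2)) \<le> (2 + ln (real f1)) / (real f1)^2"
proof -
  have "(\<Sum>f2\<in>{1..M}. max_majorant (f1, f2)) \<le> (\<Sum>f2\<in>{1..f1} \<union> {f1<..M}. max_majorant (f1, f2))"
    by (intro sum_mono2) (auto simp: max_majorant_nonneg)
  also have "\<dots> = (\<Sum>f2\<in>{1..f1}. max_majorant (f1, f2)) + (\<Sum>f2\<in>{f1<..M}. max_majorant (f1, f2))"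
    by (intro sum.union_disjoint) auto
  also have "(\<Sum>f2\<in>{1..f1}. max_majorant (f1, f2)) = harm f1 / (real f1)^2"
    by (auto simp: harm_def max_majorant_def power2_eq_square divide_inverse sum_distrib_left
        mult_ac intro!: sum.cong)
  also have "(\<Sum>f2\<in>{f1<..M}. max_majorant (f1, f2)) = (\<Sum>f2\<in>{f1<..M}. 1 / (real f2)^2) / real f1"
    by (auto simp: max_majorant_def sum_divide_distrib power2_eq_square intro!: sum.cong)
  also have "harm f1 / (real f1)^2 + (\<Sum>f2\<in>{f1<..M}. 1 / (real f2)^2) / real f1
      \<le> (1 + ln (real f1)) / (real f1)^2 + (1 / real f1) / real f1"
    using assms harm_le_one_plus_ln sum_inverse_squares_tail_le
    by (intro add_mono divide_right_mono) auto
  also have "\<dots> = (2 + ln (real f1)) / (real f1)^2"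
    using assms by (simp add: field_simps power2_eq_square)
  finally show ?thesis .
qed

lemma sum_max_majorant_rows_tail_le:
  assumes "N \<ge> 1"
  shows "(\<Sum>f1\<in>{N<..M}. \<Sum>f2\<in>{1..M}. max_majorant (f1, f2)) \<le> (4 + ln (real N)) / real N"
proof -
  have "(\<Sum>f1\<in>{N<..M}. \<Sum>f2\<in>{1..M}. max_majorant (f1, f2))
      \<le> (\<Sum>f1\<in>{N<..M}. (2 + ln (real f1)) / (real f1)^2)"
    using assms by (intro sum_mono sum_max_majorant_row_le) auto
  also have "\<dots> \<le> (4 + ln (real N)) / real N"
    using assms by (rule sum_ln_over_squares_tail_le)
  finally show ?thesis .
qed

lemma sum_max_majorant_tail_le:
  assumes "finite F" "F \<subseteq> {1..} \<times> {1..} - {1..N} \<times> {1..N}" "N \<ge> 1"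
  shows "(\<Sum>p\<in>F. max_majorant p) \<le> 2 * ((4 + ln (real N)) / real N)"
proof -
  define M where "M = Max (insert 0 (fst ` F \<union> snd ` F))"
  have M: "fst p \<le> M" "snd p \<le> M" if "p \<in> F" for p
    unfolding M_def using assms(1) that by (auto intro!: Max_ge)
  define A where "A = {N<..M} \<times> {1..M}"
  define B where "B = {1..M} \<times> {N<..M}"
  have "F \<subseteq> A \<union> B"
    using assms(2) M unfolding A_def B_def by fastforce
  hence "(\<Sum>p\<in>F. max_majorant p) \<le> (\<Sum>p\<in>A \<union> B. max_majorant p)"
    unfolding A_def B_def by (intro sum_mono2) (auto simp: max_majorant_nonneg)
  also have "\<dots> \<le> (\<Sum>p\<in>A. max_majorant p) + (\<Sum>p\<in>B. max_majorant p)"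
    unfolding A_def B_def by (subst sum_Un) (auto intro!: sum_nonneg simp: max_majorant_nonneg)
  also have "(\<Sum>p\<in>A. max_majorant p) = (\<Sum>f1\<in>{N<..M}. \<Sum>f2\<in>{1..M}. max_majorant (f1, f2))"
    unfolding A_def by (simp add: sum.cartesian_product)
  also have "(\<Sum>p\<in>B. max_majorant p) = (\<Sum>f2\<in>{N<..M}. \<Sum>f1\<in>{1..M}. max_majorant (f2, f1))"
    unfolding B_def by (subst sum.swap) (simp add: sum.cartesian_product max_majorant_commute)
  finally show ?thesis
    using sum_max_majorant_rows_tail_le[OF assms(3), of M] by linarith
qed

lemma max_majorant_abs_summable:
  "Infinite_Sum.abs_summable_on max_majorant ({1..} \<times> {1..})"
proof (rule nonneg_bdd_above_summable_on)
  show "bdd_above (sum (\<lambda>p. norm (max_majorant p)) ` {F. F \<subseteq> {1..} \<times> {1..} \<and> finite F})"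
  proof (rule bdd_aboveI2)
    fix F :: "(nat \<times> nat) set" assume F: "F \<in> {F. F \<subseteq> {1..} \<times> {1..} \<and> finite F}"
    have "(\<Sum>p\<in>F. max_majorant p) \<le> (\<Sum>p\<in>insert (1, 1) (F - {(1, 1)}). max_majorant p)"
      using F by (intro sum_mono2) (auto simp: max_majorant_nonneg)
    also have "\<dots> = 1 + (\<Sum>p\<in>F - {(1, 1)}. max_majorant p)"
      using F by (subst sum.insert) (simp_all add: max_majorant_def)
    also have "(\<Sum>p\<in>F - {(1, 1)}. max_majorant p) \<le> 2 * ((4 + ln (real (1::nat))) / real (1::nat))"
      using F by (intro sum_max_majorant_tail_le) auto
    finally show "(\<Sum>p\<in>F. norm (max_majorant p)) \<le> 9"
      by (simp add: abs_of_nonneg max_majorant_nonneg)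
  qed
qed simp

lemma norm_infsum_le_max_majorant_tail:
  fixes g :: "nat \<times> nat \<Rightarrow> 'a :: banach"
  assumes "A \<subseteq> {1..} \<times> {1..} - {1..N} \<times> {1..N}" "N \<ge> 1"
    and "\<And>p. p \<in> A \<Longrightarrow> norm (g p) \<le> max_majorant p"
  shows "norm (infsum g A) \<le> 2 * ((4 + ln (real N)) / real N)"
proof -
  have "Infinite_Sum.abs_summable_on max_majorant A"
    using max_majorant_abs_summable by (rule summable_on_subset_banach) (use assms(1) in auto)
  hence summable: "Infinite_Sum.abs_summable_on g A"
    by (rule Infinite_Sum.abs_summable_on_comparison_test)
      (use assms(3) in \<open>simp add: abs_of_nonneg max_majorant_nonneg\<close>)
  have "norm (infsum g A) \<le> infsum (\<lambda>p. norm (g p)) A"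
    using summable by (rule norm_infsum_bound)
  also have "\<dots> \<le> 2 * ((4 + ln (real N)) / real N)"
  proof (rule infsum_le_finite_sums[OF summable])
    fix F assume F: "finite F" "F \<subseteq> A"
    have "(\<Sum>p\<in>F. norm (g p)) \<le> (\<Sum>p\<in>F. max_majorant p)"
      using F assms(3) by (intro sum_mono) auto
    also have "\<dots> \<le> 2 * ((4 + ln (real N)) / real N)"
      using F assms(1,2) by (intro sum_max_majorant_tail_le) auto
    finally show "(\<Sum>p\<in>F. norm (g p)) \<le> 2 * ((4 + ln (real N)) / real N)" .
  qed
  finally show ?thesis .
qed

section \<open>The constant\<close>

definition lcm_term :: "nat \<times> nat \<Rightarrow> real" where
  "lcm_term = (\<lambda>(f1, f2). real_of_int (mobius f1 * mobius f2) / (real f1 * real f2 * real (lcm f1 f2)))"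

definition coprime_pairs :: "nat \<Rightarrow> nat \<Rightarrow> (nat \<times> nat) set" where
  "coprime_pairs a1 a2 = {(f1, f2). f1 \<ge> 1 \<and> f2 \<ge> 1 \<and> coprime f1 a1 \<and> coprime f2 a2}"

lemma abs_mobius_mult_le_one: "\<bar>real_of_int (mobius m * mobius n)\<bar> \<le> 1"
  using abs_mobius_le_one[of m] abs_mobius_le_one[of n]
  by (simp add: abs_mult mult_le_one flip: of_int_abs)

lemma max_le_lcm:
  fixes m n :: nat
  assumes "m \<ge> 1" "n \<ge> 1"
  shows "max m n \<le> lcm m n"
  using assms by (simp add: dvd_imp_le lcm_pos_nat)

lemma norm_lcm_term_le:
  assumes "p \<in> {1..} \<times> {1..}"
  shows "norm (lcm_term p) \<le> max_majorant p"
proof -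
  obtain f1 f2 where p: "p = (f1, f2)" "f1 \<ge> 1" "f2 \<ge> 1" using assms by auto
  have "norm (lcm_term p) \<le> 1 / (real f1 * real f2 * real (lcm f1 f2))"
    using p abs_mobius_mult_le_one[of f1 f2]
    by (simp add: lcm_term_def abs_mult divide_right_mono)
  also have "\<dots> \<le> max_majorant p"
    using p max_le_lcm[of f1 f2]
    by (simp add: max_majorant_def frac_le mult_left_mono del: of_nat_max)
  finally show ?thesis .
qed

lemma lcm_term_abs_summable: "Infinite_Sum.abs_summable_on lcm_term ({1..} \<times> {1..})"
proof (rule Infinite_Sum.abs_summable_on_comparison_test[OF max_majorant_abs_summable])
  fix p :: "nat \<times> nat" assume "p \<in> {1..} \<times> {1..}"
  thus "norm (lcm_term p) \<le> norm (max_majorant p)"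
    using norm_lcm_term_le[of p] by (simp add: abs_of_nonneg max_majorant_nonneg)
qed

lemma norm_C1_term_le:
  assumes "a1 \<ge> 1" "a2 \<ge> 1" "p \<in> {1..} \<times> {1..}"
  shows "norm (C1_term a1 a2 p) \<le> real (a1 * a2) * max_majorant p"
proof -
  obtain d1 d2 where p: "p = (d1, d2)" "d1 \<ge> 1" "d2 \<ge> 1" using assms(3) by auto
  define l where "l = lcm (d1 div gcd a1 d1) (d2 div gcd a2 d2)"
  have "d1 div gcd a1 d1 > 0" "d2 div gcd a2 d2 > 0"
    using p by (auto simp: div_greater_zero_iff gcd_le2_nat)
  hence l: "l \<ge> 1" unfolding l_def by (simp add: Suc_le_eq lcm_pos_nat)
  have "d1 \<le> a1 * (d1 div gcd a1 d1)" "d2 \<le> a2 * (d2 div gcd a2 d2)"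
    by (metis dvd_mult_div_cancel gcd_dvd2 gcd_le1_nat mult_le_mono1 not_one_le_zero assms)+
  moreover have "a1 * (d1 div gcd a1 d1) \<le> a1 * a2 * l" "a2 * (d2 div gcd a2 d2) \<le> a1 * a2 * l"
    using assms l by (auto simp: l_def intro!: mult_le_mono dvd_imp_le)
  ultimately have "d1 \<le> a1 * a2 * l" "d2 \<le> a1 * a2 * l" by linarith+
  hence "real (max d1 d2) \<le> real (a1 * a2) * real l"
    by (simp del: of_nat_mult add: of_nat_mult[symmetric])
  hence max_le: "real (max d1 d2) / real (a1 * a2) \<le> real l"
    using assms by (simp add: field_simps)
  have "norm (C1_term a1 a2 p) \<le> 1 / (real d1 * real d2 * real l)"
    using p abs_mobius_mult_le_one[of d1 d2]
    by (simp add: C1_term_def l_def abs_mult divide_right_mono)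
  also have "\<dots> \<le> 1 / (real d1 * real d2 * (real (max d1 d2) / real (a1 * a2)))"
    using p assms l max_le
    by (intro divide_left_mono mult_left_mono mult_pos_pos) auto
  also have "\<dots> = real (a1 * a2) * max_majorant p"
    using p assms by (simp add: max_majorant_def field_simps del: of_nat_max)
  finally show ?thesis .
qed

lemma C1_term_abs_summable:
  assumes "a1 \<ge> 1" "a2 \<ge> 1"
  shows "Infinite_Sum.abs_summable_on (C1_term a1 a2) ({1..} \<times> {1..})"
proof (rule Infinite_Sum.abs_summable_on_comparison_test)
  show "Infinite_Sum.abs_summable_on (\<lambda>p. real (a1 * a2) * max_majorant p) ({1..} \<times> {1..})"
    using max_majorant_abs_summable by (simp add: abs_of_nonneg max_majorant_nonneg summable_on_cmult_right)
  fix p :: "nat \<times> nat" assume "p \<in> {1..} \<times> {1..}"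
  thus "norm (C1_term a1 a2 p) \<le> norm (real (a1 * a2) * max_majorant p)"
    using norm_C1_term_le[OF assms, of p] by (simp add: abs_of_nonneg max_majorant_nonneg)
qed

lemma gcd_mult_coprime_eq:
  fixes a e f :: nat
  assumes "e dvd a" "coprime f a"
  shows "gcd a (e * f) = e"
  using assms by (simp add: coprime_commute gcd_mult_right_right_cancel gcd_proj2_if_dvd)

lemma coprime_div_gcd_if_squarefree:
  fixes a d :: nat
  assumes "squarefree d"
  shows "coprime (d div gcd a d) a"
proof (rule coprimeI)
  fix p assume p: "p dvd d div gcd a d" "p dvd a"
  have d: "d = gcd a d * (d div gcd a d)" by simp
  have "p dvd d" using p(1) by (subst d) (rule dvd_mult)
  with p(2) have "p dvd gcd a d" by simp
  hence "p * p dvd gcd a d * (d div gcd a d)" using p(1) by (rule mult_dvd_mono)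
  hence "p ^ 2 dvd d" by (simp add: power2_eq_square flip: d)
  thus "is_unit p" by (rule squarefreeD[OF assms])
qed

definition factored_pairs :: "nat \<Rightarrow> nat \<Rightarrow> ((nat \<times> nat) \<times> (nat \<times> nat)) set" where
  "factored_pairs a1 a2 = ({e. e dvd a1} \<times> {e. e dvd a2}) \<times> coprime_pairs a1 a2"

definition mult_pairs :: "(nat \<times> nat) \<times> (nat \<times> nat) \<Rightarrow> nat \<times> nat" where
  "mult_pairs = (\<lambda>((e1, e2), (f1, f2)). (e1 * f1, e2 * f2))"

definition mobius_div_pair :: "nat \<times> nat \<Rightarrow> real" where
  "mobius_div_pair = (\<lambda>(e1, e2). real_of_int (mobius e1) / real e1 * (real_of_int (mobius e2) / real e2))"

lemma C1_term_mult_pairs: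
  assumes "a1 \<ge> 1" "a2 \<ge> 1" "x \<in> factored_pairs a1 a2"
  shows "C1_term a1 a2 (mult_pairs x) = mobius_div_pair (fst x) * lcm_term (snd x)"
proof -
  obtain e1 e2 f1 f2 where x: "x = ((e1, e2), (f1, f2))" by (metis prod.exhaust)
  have e: "e1 dvd a1" "e2 dvd a2" and f: "coprime f1 a1" "coprime f2 a2"
    using assms(3) by (auto simp: x factored_pairs_def coprime_pairs_def)
  have "e1 > 0" "e2 > 0" using e assms(1,2) by (auto intro: Nat.gr0I)
  moreover have "mobius (e1 * f1) = mobius e1 * mobius f1" "mobius (e2 * f2) = mobius e2 * mobius f2"
    using e f by (auto intro!: mobius_mult_coprime coprime_divisors[of e1 a1 f1 f1]
        coprime_divisors[of e2 a2 f2 f2] simp: coprime_commute)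
  ultimately show ?thesis
    using gcd_mult_coprime_eq[OF e(1) f(1)] gcd_mult_coprime_eq[OF e(2) f(2)]
    by (simp add: x mult_pairs_def C1_term_def mobius_div_pair_def lcm_term_def field_simps)
qed

lemma inj_on_mult_pairs:
  assumes "a1 \<ge> 1" "a2 \<ge> 1"
  shows "inj_on mult_pairs (factored_pairs a1 a2)"
proof (rule inj_onI)
  fix x y assume xy: "x \<in> factored_pairs a1 a2" "y \<in> factored_pairs a1 a2" "mult_pairs x = mult_pairs y"
  obtain e1 e2 f1 f2 where x: "x = ((e1, e2), (f1, f2))" by (metis prod.exhaust)
  obtain e1' e2' f1' f2' where y: "y = ((e1', e2'), (f1', f2'))" by (metis prod.exhaust)
  have "e1 dvd a1" "e2 dvd a2" "e1' dvd a1" "e2' dvd a2"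
       "coprime f1 a1" "coprime f2 a2" "coprime f1' a1" "coprime f2' a2"
    using xy(1,2) by (auto simp: x y factored_pairs_def coprime_pairs_def)
  moreover have "e1 * f1 = e1' * f1'" "e2 * f2 = e2' * f2'"
    using xy(3) by (auto simp: x y mult_pairs_def)
  ultimately have "e1 = e1'" "e2 = e2'" by (metis gcd_mult_coprime_eq)+
  moreover have "e1 > 0" "e2 > 0" using assms \<open>e1 dvd a1\<close> \<open>e2 dvd a2\<close> by (auto intro: Nat.gr0I)
  ultimately show "x = y" using \<open>e1 * f1 = e1' * f1'\<close> \<open>e2 * f2 = e2' * f2'\<close> by (simp add: x y)
qed

lemma mult_pairs_image_subset:
  assumes "a1 \<ge> 1" "a2 \<ge> 1"
  shows "mult_pairs ` factored_pairs a1 a2 \<subseteq> {1..} \<times> {1..}"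
  using assms
  by (auto simp: mult_pairs_def factored_pairs_def coprime_pairs_def Suc_le_eq intro: dvd_pos_nat)

lemma C1_term_eq_0_off_mult_pairs:
  assumes "d \<notin> mult_pairs ` factored_pairs a1 a2"
  shows "C1_term a1 a2 d = 0"
proof -
  obtain d1 d2 where d: "d = (d1, d2)" by (cases d)
  have "\<not> (squarefree d1 \<and> squarefree d2)"
  proof
    assume sq: "squarefree d1 \<and> squarefree d2"
    hence "d1 > 0" "d2 > 0" by (auto intro: Nat.gr0I)
    hence "((gcd a1 d1, gcd a2 d2), (d1 div gcd a1 d1, d2 div gcd a2 d2)) \<in> factored_pairs a1 a2"
      using sq by (auto simp: factored_pairs_def coprime_pairs_def coprime_div_gcd_if_squarefree
          Suc_le_eq div_greater_zero_iff gcd_le2_nat)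
    moreover have "mult_pairs ((gcd a1 d1, gcd a2 d2), (d1 div gcd a1 d1, d2 div gcd a2 d2)) = d"
      by (simp add: mult_pairs_def d)
    ultimately show False using assms by (metis image_eqI)
  qed
  thus ?thesis by (auto simp: d C1_term_def mobius_def)
qed

lemma sum_mobius_div_pair_divisors:
  assumes "a1 \<ge> 1" "a2 \<ge> 1"
  shows "sum mobius_div_pair ({e. e dvd a1} \<times> {e. e dvd a2})
           = real (totient a1) / real a1 * (real (totient a2) / real a2)"
proof -
  have "sum mobius_div_pair ({e. e dvd a1} \<times> {e. e dvd a2})
      = (\<Sum>e | e dvd a1. real_of_int (mobius e) / real e) * (\<Sum>e | e dvd a2. real_of_int (mobius e) / real e)"
    by (simp add: mobius_div_pair_def sum_product sum.cartesian_product)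
  thus ?thesis using assms by (simp add: sum_mobius_div_divisors)
qed

lemma has_sum_mobius_div_pair_times_lcm_term:
  assumes "a1 \<ge> 1" "a2 \<ge> 1"
  shows "((\<lambda>(e, f). mobius_div_pair e * lcm_term f) has_sum
            real (totient a1) / real a1 * (real (totient a2) / real a2)
            * infsum lcm_term (coprime_pairs a1 a2)) (factored_pairs a1 a2)"
proof -
  define E where "E = {e. e dvd a1} \<times> {e. e dvd a2}"
  define H where "H = infsum lcm_term (coprime_pairs a1 a2)"
  have E: "finite E" using assms by (simp add: E_def finite_divisors_nat)
  have abs_summable: "Infinite_Sum.abs_summable_on lcm_term (coprime_pairs a1 a2)"
    using lcm_term_abs_summable by (rule summable_on_subset_banach) (auto simp: coprime_pairs_def)
  have "((\<lambda>(e, f). mobius_div_pair e * lcm_term f) has_sum sum mobius_div_pair E * H)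
          (Sigma E (\<lambda>_. coprime_pairs a1 a2))"
  proof (rule has_sum_SigmaI)
    show "((\<lambda>f. case (e, f) of (e, f) \<Rightarrow> mobius_div_pair e * lcm_term f) has_sum
            mobius_div_pair e * H) (coprime_pairs a1 a2)" for e
      using abs_summable_summable[OF abs_summable] by (simp add: H_def has_sum_cmult_right)
    show "((\<lambda>e. mobius_div_pair e * H) has_sum sum mobius_div_pair E * H) E"
      using E by (simp add: sum_distrib_right)
    have "Infinite_Sum.abs_summable_on (\<lambda>(e, f). mobius_div_pair e * lcm_term f)
            (Sigma E (\<lambda>_. coprime_pairs a1 a2))"
      by (rule Infinite_Sum.abs_summable_on_Sigma_iff[THEN iffD2])
        (use E abs_summable in \<open>auto simp: abs_mult intro: summable_on_cmult_right\<close>)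
    thus "(\<lambda>(e, f). mobius_div_pair e * lcm_term f) summable_on Sigma E (\<lambda>_. coprime_pairs a1 a2)"
      by (rule abs_summable_summable)
  qed
  thus ?thesis
    using sum_mobius_div_pair_divisors[OF assms] by (simp add: E_def H_def factored_pairs_def)
qed

lemma C1_term_has_sum:
  assumes "a1 \<ge> 1" "a2 \<ge> 1"
  shows "(C1_term a1 a2 has_sum real (totient a1) / real a1 * (real (totient a2) / real a2)
            * infsum lcm_term (coprime_pairs a1 a2)) ({1..} \<times> {1..})"
    (is "(_ has_sum ?S) _")
proof -
  define D where "D = factored_pairs a1 a2"
  have inj: "inj_on mult_pairs D" unfolding D_def using assms by (rule inj_on_mult_pairs)
  have "(C1_term a1 a2 \<circ> mult_pairs) x = (\<lambda>(e, f). mobius_div_pair e * lcm_term f) x"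
    if "x \<in> D" for x
    using C1_term_mult_pairs[OF assms] that by (simp add: D_def case_prod_beta)
  hence "((C1_term a1 a2 \<circ> mult_pairs) has_sum ?S) D"
    using has_sum_mobius_div_pair_times_lcm_term[OF assms] has_sum_cong[of D "C1_term a1 a2 \<circ> mult_pairs"]
    unfolding D_def by blast
  hence "(C1_term a1 a2 has_sum ?S) (mult_pairs ` D)"
    by (rule has_sum_reindex[OF inj, THEN iffD2])
  thus ?thesis
    by (rule has_sum_cong_neutral[THEN iffD1, rotated -1])
      (use mult_pairs_image_subset[OF assms] C1_term_eq_0_off_mult_pairs in \<open>auto simp: D_def\<close>)
qed

lemma C1_eq:
  assumes "a1 \<ge> 1" "a2 \<ge> 1"
  shows "C1 a1 a2 = real (totient a1) * real (totient a2) * infsum lcm_term (coprime_pairs a1 a2) / 3"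
  using infsumI[OF C1_term_has_sum[OF assms]] assms by (simp add: C1_def field_simps)

section \<open>The partial sums\<close>

definition coprime_mobius_weight :: "nat \<Rightarrow> nat \<Rightarrow> nat \<Rightarrow> nat \<Rightarrow> real" where
  "coprime_mobius_weight a1 a2 f1 f2 = (if coprime f1 a1 \<and> coprime f2 a2
      then real_of_int (mobius f1 * mobius f2) / (real f1 * real f2) else 0)"

definition sum_squares_multiples :: "nat \<Rightarrow> nat \<Rightarrow> real" where
  "sum_squares_multiples N m = (\<Sum>n\<in>{1..N}. if m dvd n then (real n)^2 else 0)"

lemma abs_coprime_mobius_weight_le: "\<bar>coprime_mobius_weight a1 a2 f1 f2\<bar> \<le> 1 / (real f1 * real f2)"
  using abs_mobius_mult_le_one[of f1 f2]
  by (auto simp: coprime_mobius_weight_def abs_mult divide_right_mono)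

lemma sum_coprime_divisors_eq_sum_upto:
  fixes n N a :: nat
  assumes "n \<in> {1..N}"
  shows "(\<Sum>f | f dvd n \<and> coprime f a. g f) = (\<Sum>f\<in>{1..N}. if f dvd n \<and> coprime f a then g f else 0)"
proof -
  have "{f. f dvd n \<and> coprime f a} = {f \<in> {1..N}. f dvd n \<and> coprime f a}"
    using assms by (auto simp: Suc_le_eq dvd_pos_nat intro: le_trans[OF dvd_imp_le])
  thus ?thesis by (simp only: sum.inter_filter[OF finite_atLeastAtMost])
qed

lemma totient_mult_product_eq:
  assumes "a1 \<ge> 1" "a2 \<ge> 1" "n \<in> {1..N}"
  shows "real (totient (a1 * n) * totient (a2 * n)) = real (totient a1) * real (totient a2) *
           (\<Sum>f1\<in>{1..N}. \<Sum>f2\<in>{1..N}. coprime_mobius_weight a1 a2 f1 f2 *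
              (if lcm f1 f2 dvd n then (real n)^2 else 0))"
proof -
  define s where "s a f = (if f dvd n \<and> coprime f a then real_of_int (mobius f) / real f else 0)"
    for a f
  have "real (totient (a * n)) = real (totient a) * real n * (\<Sum>f\<in>{1..N}. s a f)"
    if "a \<ge> 1" for a
    using that assms(3) totient_mult_eq[of a n] sum_coprime_divisors_eq_sum_upto[OF assms(3)]
    by (simp add: s_def)
  hence "real (totient (a1 * n) * totient (a2 * n)) = real (totient a1) * real (totient a2) *
           ((real n)^2 * (\<Sum>f1\<in>{1..N}. \<Sum>f2\<in>{1..N}. s a1 f1 * s a2 f2))"
    using assms by (simp add: sum_product power2_eq_square)
  also have "(real n)^2 * (\<Sum>f1\<in>{1..N}. \<Sum>f2\<in>{1..N}. s a1 f1 * s a2 f2)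
      = (\<Sum>f1\<in>{1..N}. \<Sum>f2\<in>{1..N}. coprime_mobius_weight a1 a2 f1 f2 *
           (if lcm f1 f2 dvd n then (real n)^2 else 0))"
    by (auto simp: sum_distrib_left s_def coprime_mobius_weight_def intro!: sum.cong)
  finally show ?thesis .
qed

lemma sum_totient_mult_product_eq:
  assumes "a1 \<ge> 1" "a2 \<ge> 1"
  shows "(\<Sum>n\<in>{1..N}. real (totient (a1 * n) * totient (a2 * n)))
    = real (totient a1) * real (totient a2) *
      (\<Sum>f1\<in>{1..N}. \<Sum>f2\<in>{1..N}. coprime_mobius_weight a1 a2 f1 f2 * sum_squares_multiples N (lcm f1 f2))"
proof -
  define c where "c = real (totient a1) * real (totient a2)"
  define h where "h f1 f2 n = coprime_mobius_weight a1 a2 f1 f2 * (if lcm f1 f2 dvd n then (real n)^2 else 0)"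
    for f1 f2 n :: nat
  have "(\<Sum>n\<in>{1..N}. real (totient (a1 * n) * totient (a2 * n)))
      = (\<Sum>n\<in>{1..N}. c * (\<Sum>f1\<in>{1..N}. \<Sum>f2\<in>{1..N}. h f1 f2 n))"
    unfolding c_def h_def using totient_mult_product_eq[OF assms] by (intro sum.cong refl) blast
  also have "\<dots> = c * (\<Sum>n\<in>{1..N}. \<Sum>f1\<in>{1..N}. \<Sum>f2\<in>{1..N}. h f1 f2 n)"
    by (rule sum_distrib_left[symmetric])
  also have "(\<Sum>n\<in>{1..N}. \<Sum>f1\<in>{1..N}. \<Sum>f2\<in>{1..N}. h f1 f2 n)
      = (\<Sum>f1\<in>{1..N}. \<Sum>n\<in>{1..N}. \<Sum>f2\<in>{1..N}. h f1 f2 n)"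
    by (rule sum.swap)
  also have "\<dots> = (\<Sum>f1\<in>{1..N}. \<Sum>f2\<in>{1..N}. \<Sum>n\<in>{1..N}. h f1 f2 n)"
    by (rule sum.cong[OF refl sum.swap])
  finally show ?thesis
    by (simp only: c_def h_def sum_squares_multiples_def sum_distrib_left mult_if_delta)
qed

lemma sum_squares_upto: "(\<Sum>k\<in>{1..t}. (real k)^2) = real t * (real t + 1) * (2 * real t + 1) / 6"
  by (induction t) (auto simp: field_simps power2_eq_square)

lemma sum_squares_multiples_eq:
  assumes "m \<ge> 1"
  shows "sum_squares_multiples N m = (real m)^2 * (\<Sum>k\<in>{1..N div m}. (real k)^2)"
proof -
  have "{n \<in> {1..N}. m dvd n} = (\<lambda>k. m * k) ` {1..N div m}"
    using assms by (auto simp: less_eq_div_iff_mult_less_eq mult.commute elim!: dvdE)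
  hence "sum_squares_multiples N m = (\<Sum>n\<in>(\<lambda>k. m * k) ` {1..N div m}. (real n)^2)"
    unfolding sum_squares_multiples_def by (simp only: sum.inter_filter[OF finite_atLeastAtMost, symmetric])
  also have "\<dots> = (\<Sum>k\<in>{1..N div m}. (real m)^2 * (real k)^2)"
    using assms by (subst sum.reindex) (auto simp: inj_on_def power_mult_distrib)
  finally show ?thesis by (simp add: sum_distrib_left)
qed

lemma sum_squares_upto_approx:
  fixes y :: real
  assumes "real t \<le> y" "y < real t + 1"
  shows "\<bar>real t * (real t + 1) * (2 * real t + 1) / 6 - y^3 / 3\<bar> \<le> y^2"
proof -
  define s where "s = real t"
  have s: "0 \<le> s" "s \<le> y" "y < s + 1" using assms by (auto simp: s_def)
  have P: "s * (s + 1) * (2 * s + 1) / 6 = s^3 / 3 + s^2 / 2 + s / 6"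
    by (simp add: field_simps power2_eq_square power3_eq_cube)
  have pow: "s^3 \<le> y^3" "s^2 \<le> y^2" "0 \<le> y^3" "0 \<le> y^2" using s by (auto intro: power_mono)
  have "s * (s + 1) * (2 * s + 1) / 6 - y^3 / 3 \<le> y^2"
  proof (cases "t = 0")
    case False
    hence "s \<le> s^2" by (simp add: s_def power2_eq_square)
    thus ?thesis using P pow by linarith
  next
    case True
    hence "s * (s + 1) * (2 * s + 1) / 6 = 0" by (simp add: s_def)
    thus ?thesis using pow by linarith
  qed
  moreover have "y^3 - s^3 \<le> 3 * y^2"
  proof -
    have "y^3 - s^3 = (y - s) * (y^2 + y * s + s^2)"
      by (simp add: field_simps power2_eq_square power3_eq_cube)
    also have "\<dots> \<le> 1 * (y^2 + y * s + s^2)"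
      using s by (intro mult_right_mono) auto
    also have "\<dots> \<le> 3 * y^2"
      using s pow mult_left_mono[of s y y] by (simp add: power2_eq_square)
    finally show ?thesis .
  qed
  hence "y^3 / 3 - s * (s + 1) * (2 * s + 1) / 6 \<le> y^2"
    using P s zero_le_power2[of s] by linarith
  ultimately show ?thesis unfolding s_def by linarith
qed

lemma sum_squares_multiples_approx:
  fixes x :: real
  assumes "m \<ge> 1" "x \<ge> 0"
  shows "\<bar>sum_squares_multiples (nat \<lfloor>x\<rfloor>) m - x^3 / (3 * real m)\<bar> \<le> x^2"
proof -
  define N where "N = nat \<lfloor>x\<rfloor>"
  define y where "y = x / real m"
  have m: "real m > 0" using assms by simp
  have "N div m * m \<le> N" by simp
  moreover have "N + 1 \<le> (N div m + 1) * m"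
    using assms div_mult_mod_eq[of N m] mod_less_divisor[of m N]
    by (simp only: distrib_right mult_1) linarith
  ultimately have "real (N div m * m) \<le> real N" "real (N + 1) \<le> real ((N div m + 1) * m)"
    by (simp_all only: of_nat_le_iff)
  hence "real (N div m) * real m \<le> real N" "real N + 1 \<le> (real (N div m) + 1) * real m"
    by (simp_all add: algebra_simps)
  moreover have "real N \<le> x" "x < real N + 1" unfolding N_def using assms by linarith+
  ultimately have "real (N div m) \<le> y" "y < real (N div m) + 1"
    using m unfolding y_def by (simp_all add: field_simps)
  hence "\<bar>(\<Sum>k\<in>{1..N div m}. (real k)^2) - y^3 / 3\<bar> \<le> y^2"
    unfolding sum_squares_upto by (rule sum_squares_upto_approx)
  hence "\<bar>(real m)^2 * ((\<Sum>k\<in>{1..N div m}. (real k)^2) - y^3 / 3)\<bar> \<le> (real m)^2 * y^2"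
    by (simp add: abs_mult mult_left_mono)
  moreover have "x^3 / (3 * real m) = (real m)^2 * (y^3 / 3)" "(real m)^2 * y^2 = x^2"
    using m by (simp_all add: y_def field_simps power2_eq_square power3_eq_cube)
  ultimately show ?thesis
    by (simp only: N_def sum_squares_multiples_eq[OF assms(1)] right_diff_distrib)
qed

section \<open>The error term\<close>

lemma infsum_lcm_term_split:
  "infsum lcm_term (coprime_pairs a1 a2)
     = (\<Sum>f1\<in>{1..N}. \<Sum>f2\<in>{1..N}. coprime_mobius_weight a1 a2 f1 f2 / real (lcm f1 f2))
       + infsum lcm_term (coprime_pairs a1 a2 - {1..N} \<times> {1..N})"
proof -
  define B where "B = {1..N} \<times> {1..N}"
  have summable: "lcm_term summable_on A" if "A \<subseteq> coprime_pairs a1 a2" for A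
    using abs_summable_summable[OF lcm_term_abs_summable]
    by (rule summable_on_subset_banach) (use that in \<open>auto simp: coprime_pairs_def\<close>)
  have "infsum lcm_term (coprime_pairs a1 a2)
      = infsum lcm_term (coprime_pairs a1 a2 \<inter> B) + infsum lcm_term (coprime_pairs a1 a2 - B)"
    using infsum_Un_disjoint[OF summable summable, of "coprime_pairs a1 a2 \<inter> B" "coprime_pairs a1 a2 - B"]
    by (simp add: Int_Diff_Un Int_Diff_disjoint)
  also have "infsum lcm_term (coprime_pairs a1 a2 \<inter> B) = sum lcm_term (B \<inter> coprime_pairs a1 a2)"
    by (simp add: B_def Int_commute)
  also have "\<dots> = (\<Sum>p\<in>B. if p \<in> coprime_pairs a1 a2 then lcm_term p else 0)"
    by (rule sum.inter_restrict) (simp add: B_def)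
  also have "\<dots> = (\<Sum>f1\<in>{1..N}. \<Sum>f2\<in>{1..N}. coprime_mobius_weight a1 a2 f1 f2 / real (lcm f1 f2))"
    by (auto simp: B_def sum.cartesian_product coprime_pairs_def coprime_mobius_weight_def lcm_term_def
        intro!: sum.cong)
  finally show ?thesis unfolding B_def .
qed

lemma abs_infsum_lcm_term_tail_le:
  assumes "N \<ge> 1"
  shows "\<bar>infsum lcm_term (coprime_pairs a1 a2 - {1..N} \<times> {1..N})\<bar> \<le> 2 * ((4 + ln (real N)) / real N)"
proof -
  have "norm (infsum lcm_term (coprime_pairs a1 a2 - {1..N} \<times> {1..N})) \<le> 2 * ((4 + ln (real N)) / real N)"
  proof (rule norm_infsum_le_max_majorant_tail[OF _ assms])
    show "coprime_pairs a1 a2 - {1..N} \<times> {1..N} \<subseteq> {1..} \<times> {1..} - {1..N} \<times> {1..N}"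
      by (auto simp: coprime_pairs_def)
    thus "norm (lcm_term p) \<le> max_majorant p" if "p \<in> coprime_pairs a1 a2 - {1..N} \<times> {1..N}" for p
      using that norm_lcm_term_le by blast
  qed
  thus ?thesis by simp
qed

lemma abs_lattice_error_le:
  fixes x :: real
  assumes "x \<ge> 1"
  defines "N \<equiv> nat \<lfloor>x\<rfloor>"
  shows "\<bar>\<Sum>f1\<in>{1..N}. \<Sum>f2\<in>{1..N}. coprime_mobius_weight a1 a2 f1 f2 *
            (sum_squares_multiples N (lcm f1 f2) - x^3 / (3 * real (lcm f1 f2)))\<bar>
         \<le> x^2 * (1 + ln x)^2"
proof -
  have N: "N \<ge> 1" "real N \<le> x" using assms unfolding N_def by linarith+
  have "\<bar>\<Sum>f1\<in>{1..N}. \<Sum>f2\<in>{1..N}. coprime_mobius_weight a1 a2 f1 f2 *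
            (sum_squares_multiples N (lcm f1 f2) - x^3 / (3 * real (lcm f1 f2)))\<bar>
      \<le> (\<Sum>f1\<in>{1..N}. \<Sum>f2\<in>{1..N}. 1 / (real f1 * real f2) * x^2)"
  proof (rule order.trans[OF sum_abs sum_mono], rule order.trans[OF sum_abs sum_mono])
    fix f1 f2 assume "f1 \<in> {1..N}" "f2 \<in> {1..N}"
    hence "lcm f1 f2 \<ge> 1" by (simp add: Suc_le_eq lcm_pos_nat)
    hence "\<bar>sum_squares_multiples N (lcm f1 f2) - x^3 / (3 * real (lcm f1 f2))\<bar> \<le> x^2"
      unfolding N_def using assms by (intro sum_squares_multiples_approx) auto
    thus "\<bar>coprime_mobius_weight a1 a2 f1 f2 *
            (sum_squares_multiples N (lcm f1 f2) - x^3 / (3 * real (lcm f1 f2)))\<bar>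
          \<le> 1 / (real f1 * real f2) * x^2"
      unfolding abs_mult by (intro mult_mono abs_coprime_mobius_weight_le) auto
  qed
  also have "\<dots> = x^2 * (harm N * harm N)"
    by (simp add: harm_def sum_product sum_distrib_left divide_inverse mult_ac)
  also have "\<dots> \<le> x^2 * ((1 + ln x) * (1 + ln x))"
  proof -
    have "harm N \<le> 1 + ln x"
      using harm_le_one_plus_ln[OF N(1)] ln_mono[OF N(2)] N(1) by simp
    thus ?thesis using assms by (intro mult_left_mono mult_mono) (auto simp: harm_nonneg)
  qed
  finally show ?thesis by (simp add: power2_eq_square)
qed

lemma main_term_tail_le:
  fixes x :: real
  assumes "x \<ge> 2"
  shows "x^3 / 3 * \<bar>infsum lcm_term (coprime_pairs a1 a2 - {1..nat \<lfloor>x\<rfloor>} \<times> {1..nat \<lfloor>x\<rfloor>})\<bar>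
           \<le> 4 / 3 * x^2 * (4 + ln x)"
proof -
  define N where "N = nat \<lfloor>x\<rfloor>"
  have N: "N \<ge> 1" "x / 2 \<le> real N" "real N \<le> x" using assms unfolding N_def by linarith+
  have "x^3 / 3 * \<bar>infsum lcm_term (coprime_pairs a1 a2 - {1..N} \<times> {1..N})\<bar>
      \<le> x^3 / 3 * (2 * ((4 + ln (real N)) / real N))"
    using abs_infsum_lcm_term_tail_le[OF N(1)] assms by (intro mult_left_mono) auto
  also have "\<dots> \<le> x^3 / 3 * (2 * ((4 + ln x) / (x / 2)))"
    using N assms by (intro mult_left_mono divide_mono add_left_mono) auto
  also have "\<dots> = 4 / 3 * x^2 * (4 + ln x)"
    using assms by (simp add: field_simps power2_eq_square power3_eq_cube)
  finally show ?thesis unfolding N_def .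
qed

lemma log_polynomial_le:
  fixes L :: real
  assumes "L \<ge> 1 / 2"
  shows "(1 + L)^2 + 4 / 3 * (4 + L) \<le> 40 * L^2"
proof -
  have "(1 + L)^2 \<le> (3 * L)^2" using assms by (intro power_mono) auto
  moreover have "L \<le> 2 * L^2" "1 \<le> 4 * L^2"
    using assms mult_mono[OF assms assms] by (auto simp: power2_eq_square)
  moreover have "(3 * L)^2 = 9 * L^2" "4 / 3 * (4 + L) = 16 / 3 + 4 / 3 * L"
    by (simp_all add: power_mult_distrib distrib_left)
  ultimately show ?thesis by linarith
qed

lemma abs_sum_totient_mult_product_error_le:
  fixes x :: real
  assumes "a1 \<ge> 1" "a2 \<ge> 1" "x \<ge> 2"
  shows "\<bar>(\<Sum>n\<in>{1..nat \<lfloor>x\<rfloor>}. real (totient (a1 * n) * totient (a2 * n))) - C1 a1 a2 * x ^ 3\<bar>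
           \<le> 40 * real (a1 * a2) * x\<^sup>2 * (ln x)\<^sup>2"
proof -
  define N where "N = nat \<lfloor>x\<rfloor>"
  define c where "c = real (totient a1) * real (totient a2)"
  define w where "w = coprime_mobius_weight a1 a2"
  define R where "R = infsum lcm_term (coprime_pairs a1 a2 - {1..N} \<times> {1..N})"
  define E where "E = (\<Sum>f1\<in>{1..N}. \<Sum>f2\<in>{1..N}. w f1 f2 *
      (sum_squares_multiples N (lcm f1 f2) - x^3 / (3 * real (lcm f1 f2))))"
  have L: "1 / 2 \<le> ln x" using ln2_ge_two_thirds ln_mono[OF assms(3)] by simp
  have c: "0 \<le> c" "c \<le> real (a1 * a2)"
    unfolding c_def by (simp_all add: mult_mono totient_le)
  have E: "(\<Sum>f1\<in>{1..N}. \<Sum>f2\<in>{1..N}. w f1 f2 * sum_squares_multiples N (lcm f1 f2))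
      - x^3 / 3 * (\<Sum>f1\<in>{1..N}. \<Sum>f2\<in>{1..N}. w f1 f2 / real (lcm f1 f2)) = E"
    unfolding E_def sum_distrib_left sum_subtractf[symmetric]
    by (intro sum.cong refl) (simp add: field_simps)
  have S: "(\<Sum>n\<in>{1..N}. real (totient (a1 * n) * totient (a2 * n)))
      = c * (\<Sum>f1\<in>{1..N}. \<Sum>f2\<in>{1..N}. w f1 f2 * sum_squares_multiples N (lcm f1 f2))"
    unfolding c_def w_def by (rule sum_totient_mult_product_eq[OF assms(1,2)])
  have C: "C1 a1 a2 = c * ((\<Sum>f1\<in>{1..N}. \<Sum>f2\<in>{1..N}. w f1 f2 / real (lcm f1 f2)) + R) / 3"
    unfolding c_def w_def R_def C1_eq[OF assms(1,2)] by (subst infsum_lcm_term_split[of a1 a2 N]) simp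
  have "(\<Sum>n\<in>{1..N}. real (totient (a1 * n) * totient (a2 * n))) - C1 a1 a2 * x ^ 3
      = c * E - c * (x^3 / 3 * R)"
    unfolding S C E[symmetric] by (simp add: field_simps)
  also have "\<bar>c * E - c * (x^3 / 3 * R)\<bar> \<le> \<bar>c * E\<bar> + \<bar>c * (x^3 / 3 * R)\<bar>"
    by (rule abs_triangle_ineq4)
  also have "\<dots> = c * (\<bar>E\<bar> + x^3 / 3 * \<bar>R\<bar>)"
    using c assms by (simp add: abs_mult distrib_left)
  also have "\<dots> \<le> c * (x^2 * (1 + ln x)^2 + 4 / 3 * x^2 * (4 + ln x))"
    using c assms abs_lattice_error_le[of x a1 a2] main_term_tail_le[OF assms(3), of a1 a2]
    unfolding E_def R_def N_def w_def by (intro mult_left_mono add_mono) auto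
  also have "\<dots> = c * x^2 * ((1 + ln x)^2 + 4 / 3 * (4 + ln x))"
    by (simp add: algebra_simps)
  also have "\<dots> \<le> real (a1 * a2) * x^2 * (40 * (ln x)^2)"
    using c L log_polynomial_le[OF L] by (intro mult_mono) auto
  finally show ?thesis unfolding N_def by (simp add: mult_ac)
qed

lemma real_le_divisor_sigma:
  assumes "n \<ge> 1"
  shows "real n \<le> real (divisor_sigma n)"
  using assms by (simp add: divisor_sigma_def member_le_sum finite_divisors_nat)

theorem lemma3p4:
  shows "(\<forall>a1 a2 :: nat. a1 \<ge> 1 \<longrightarrow> a2 \<ge> 1 \<longrightarrow>
            Infinite_Sum.abs_summable_on (C1_term a1 a2) ({1..} \<times> {1..})) \<and>
         (\<exists>C :: real. C > 0 \<and>
            (\<forall>a1 a2 :: nat. \<forall>x :: real. a1 \<ge> 1 \<longrightarrow> a2 \<ge> 1 \<longrightarrow> x \<ge> 2 \<longrightarrow>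
              abs ((\<Sum>n\<in>{1..nat \<lfloor>x\<rfloor>}. real (totient (a1 * n) * totient (a2 * n)))
                 - C1 a1 a2 * x ^ 3)
              \<le> C * real (divisor_sigma (a1 * a2)) * x\<^sup>2 * (ln x)\<^sup>2))"
proof -
  have error_le: "\<bar>(\<Sum>n\<in>{1..nat \<lfloor>x\<rfloor>}. real (totient (a1 * n) * totient (a2 * n))) - C1 a1 a2 * x ^ 3\<bar>
          \<le> 40 * real (divisor_sigma (a1 * a2)) * x\<^sup>2 * (ln x)\<^sup>2"
    if a: "a1 \<ge> 1" "a2 \<ge> 1" and x: "x \<ge> 2" for a1 a2 :: nat and x :: real
  proof -
    have "real (a1 * a2) \<le> real (divisor_sigma (a1 * a2))"
      using a by (intro real_le_divisor_sigma) simp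
    hence "40 * real (a1 * a2) * x\<^sup>2 * (ln x)\<^sup>2 \<le> 40 * real (divisor_sigma (a1 * a2)) * x\<^sup>2 * (ln x)\<^sup>2"
      by (intro mult_right_mono) auto
    thus ?thesis using abs_sum_totient_mult_product_error_le[OF a x] by linarith
  qed
  show ?thesis
    using C1_term_abs_summable error_le by (intro conjI exI[of _ 40]) auto
qed

end
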